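(* Let $(M,g)$ be a spacetime with hyperbolic symmetry whose metric, on the covering manifold $\tilde M$, is written in areal coordinates $(t,\theta,x,y)$ as \[ ds^2=-e^{2\mu}dt^2+e^{2\lambda}d\theta^2+t^2\left(dx^2+\sinh^2x\,dy^2\right), \] with $\mu,\lambda$ functions of $(t,\theta)$ only, $t>0$. Let $f$ be a distribution function (number density of particles) on the mass shell, written in terms of the coordinates $(t,\theta,x,y)$ and the corresponding canonical momenta $(p^1,p^2,p^3)$ (with $p^0$ determined by the mass-shell condition). Assume that (the pull-back of) $f$ is invariant under the action on $T\tilde M$ induced by the action of $G$ on $\tilde M$. Then $f$ depends only on \[ t,\ \theta,\ p^1,\ (p^2)^2+\sinh^2x\,(p^3)^2 . \]
   Context: Hyperbolic symmetry: $M\cong\mathbb{R}\times S^1\times F$ with $F$ a compact orientable surface of genus $>1$; $\tilde M\cong \mathbb{R}\times S^1\times\tilde F$ is the covering obtained from the universal cover $\tilde F$ of $F$, identified with the hyperbolic plane. $G$ is the identity component of the isometry group of the hyperbolic plane; it acts on $\tilde M$ via its action on the $\tilde F$ factor (in the coordinates above, on the hyperbolic surfaces $\{t,\theta=\text{const}\}$ with metric $t^2(dx^2+\sinh^2x\,dy^2)$), and the metric and matter fields pulled back to $\tilde M$ are invariant under this action. The mass shell is $\{g_{\alpha\beta}p^\alpha p^\beta=-1,\ p^0>0\}$ (particles of unit rest mass); the canonical momenta $p^\alpha$ are the components of a tangent vector in the coordinate basis. *)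

theory Defs
  imports "HOL-Analysis.Analysis"
begin

text \<open>Model of the hyperbolic plane (universal cover of F): the Poincare disk
  {z. norm z < 1} with metric 4 |dz|^2 / (1 - |z|^2)^2.
  The coordinates (x,y) of the paper (metric dx^2 + sinh^2 x dy^2) are geodesic polar
  coordinates about the origin: z = tanh(x/2) e^{iy}, valid for x > 0.\<close>

definition hchart :: "real \<Rightarrow> real \<Rightarrow> complex" where
  "hchart x y = complex_of_real (tanh (x / 2)) * cis y"

definition hpush :: "real \<Rightarrow> real \<Rightarrow> real \<Rightarrow> real \<Rightarrow> complex" where
  "hpush x y p2 p3 =
     p2 *\<^sub>R vector_derivative (\<lambda>s. hchart s y) (at x)
   + p3 *\<^sub>R vector_derivative (\<lambda>s. hchart x s) (at y)"

text \<open>G = identity component of the isometry group of the hyperbolic plane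
  = orientation preserving isometries of the disk = the disk automorphisms
  z \<mapsto> e^{i alpha} (z - a) / (1 - conj a z), |a| < 1.\<close>

definition hypG :: "(complex \<Rightarrow> complex) set" where
  "hypG = {\<lambda>z. cis \<alpha> * (z - a) / (1 - cnj a * z) | \<alpha> a. norm a < 1}"

text \<open>Invariance of the distribution function f(t,theta,x,y,p1,p2,p3) under the action of G
  on the tangent bundle induced by its action on the hyperbolic factor: the action fixes
  t, theta (and p0, p1) and maps (point, tangent vector) by (phi, d phi). Since phi is
  holomorphic, its differential is multiplication by the complex derivative.\<close>

definition G_invariant ::
  "(real \<Rightarrow> real \<Rightarrow> real \<Rightarrow> real \<Rightarrow> real \<Rightarrow> real \<Rightarrow> real \<Rightarrow> real) \<Rightarrow> bool" where
  "G_invariant f \<longleftrightarrow>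
     (\<forall>\<phi>\<in>hypG. \<forall>t \<theta> x y p1 p2 p3 x' y' p2' p3'.
        t > 0 \<longrightarrow> x > 0 \<longrightarrow> x' > 0 \<longrightarrow>
        hchart x' y' = \<phi> (hchart x y) \<longrightarrow>
        hpush x' y' p2' p3' = deriv \<phi> (hchart x y) * hpush x y p2 p3 \<longrightarrow>
        f t \<theta> x' y' p1 p2' p3' = f t \<theta> x y p1 p2 p3)"

end

theory Submission
  imports Defs "HOL-Complex_Analysis.Riemann_Mapping"
begin

text \<open>In the disk model, G consists of the Moebius maps z \<mapsto> e^{i t} (z - a) / (1 - conj a z),
  and it acts transitively on tangent vectors of equal hyperbolic length 2 |v| / (1 - |z|^2).
  In the geodesic polar coordinates z = tanh(x/2) e^{iy} this length is
  sqrt ((p2)^2 + sinh^2 x (p3)^2). So G moves every (x, y, p2, p3) to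
  (1, 0, sqrt ((p2)^2 + sinh^2 x (p3)^2), 0), where a G-invariant f takes the same value.\<close>

lemma Moebius_function_in_hypG: "norm w < 1 \<Longrightarrow> Moebius_function t w \<in> hypG"
  unfolding hypG_def Moebius_function_def cis_conv_exp by blast

lemma Moebius_function_has_field_derivative:
  assumes "1 - cnj w * z \<noteq> 0"
  shows "(Moebius_function t w has_field_derivative
           exp (\<i> * t) * (1 - cnj w * w) / (1 - cnj w * z)\<^sup>2) (at z)"
  unfolding Moebius_function_def
  using assms by (auto intro!: derivative_eq_intros simp: field_simps power2_eq_square)

lemma deriv_Moebius_function:
  "1 - cnj w * z \<noteq> 0 \<Longrightarrow>
     deriv (Moebius_function t w) z = exp (\<i> * t) * (1 - cnj w * w) / (1 - cnj w * z)\<^sup>2"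
  by (rule DERIV_imp_deriv) (rule Moebius_function_has_field_derivative)

text \<open>Here a is the preimage of -b under the Moebius map vanishing at z, so
  Moebius_function t a is, up to a rotation, that map followed by the one sending 0 to b.\<close>

lemma Moebius_function_value_and_deriv:
  fixes z b :: complex
  defines "D \<equiv> 1 - cnj b * z"
  defines "a \<equiv> (z - b) / cnj D"
  assumes b: "norm b < 1" and z: "norm z < 1"
  shows "norm a < 1"
    and "Moebius_function t a z = exp (\<i> * t) * (D / cnj D) * b"
    and "deriv (Moebius_function t a) z
           = exp (\<i> * t) * (D / cnj D) * ((1 - (norm b)\<^sup>2) / (1 - (norm z)\<^sup>2))"
proof -
  define s where "s = 1 - z * cnj z"
  have "norm (cnj b * z) < 1"
    using norm_mult_less[of "cnj b" 1 z 1] b z by simp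
  then have "D \<noteq> 0"
    by (auto simp: D_def)
  then have D: "D \<noteq> 0" "cnj D \<noteq> 0"
    by simp_all
  have s_real: "s = of_real (1 - (norm z)\<^sup>2)"
    by (simp only: s_def of_real_diff of_real_1 complex_norm_square)
  have "(norm z)\<^sup>2 < 1"
    using z by (simp add: power_less_one_iff)
  then have s: "s \<noteq> 0"
    unfolding s_real of_real_eq_0_iff by simp
  have "norm a = norm (Moebius_function 0 b z)"
    unfolding a_def norm_divide complex_mod_cnj
    by (simp add: D_def Moebius_function_simple norm_divide)
  then show "norm a < 1"
    using Moebius_function_norm_lt_1[OF b z] by simp
  have cnj_a: "cnj a = (cnj z - cnj b) / D"
    by (simp add: a_def)
  have num: "z - a = b * s / cnj D"
    using D by (simp add: a_def s_def D_def field_simps)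
  have den: "1 - cnj a * z = s / D"
    using D by (simp add: cnj_a s_def D_def field_simps)
  have "1 - cnj a * a = (D * cnj D - (cnj z - cnj b) * (z - b)) / (D * cnj D)"
    using D by (simp add: cnj_a a_def field_simps)
  also have "D * cnj D - (cnj z - cnj b) * (z - b) = (1 - b * cnj b) * s"
    by (simp add: D_def s_def algebra_simps)
  also have "b * cnj b = (norm b)\<^sup>2"
    using complex_norm_square[of b] by simp
  finally have norm_a: "1 - cnj a * a = s * (1 - (norm b)\<^sup>2) / (D * cnj D)"
    by (simp add: mult.commute)
  show "Moebius_function t a z = exp (\<i> * t) * (D / cnj D) * b"
    using D s by (simp add: Moebius_function_def num den)
  have "1 - cnj a * z \<noteq> 0"
    using D s by (simp add: den)
  from deriv_Moebius_function[OF this]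
  have "deriv (Moebius_function t a) z
      = exp (\<i> * t) * (s * (1 - (norm b)\<^sup>2) / (D * cnj D)) / (s / D)\<^sup>2"
    unfolding den norm_a .
  also have "\<dots> = exp (\<i> * t) * (D / cnj D) * ((1 - (norm b)\<^sup>2) / s)"
    using D s by (simp add: field_simps power2_eq_square)
  finally show "deriv (Moebius_function t a) z
      = exp (\<i> * t) * (D / cnj D) * ((1 - (norm b)\<^sup>2) / (1 - (norm z)\<^sup>2))"
    by (simp add: s_real)
qed

lemma hypG_transitive_on_frames:
  fixes z w e :: complex
  assumes z: "norm z < 1" and w: "norm w < 1" and e: "norm e = 1"
  shows "\<exists>\<phi>\<in>hypG. \<phi> z = w \<and> deriv \<phi> z = e * ((1 - (norm w)\<^sup>2) / (1 - (norm z)\<^sup>2))"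
proof -
  define b where "b = w * cnj e"
  define D where "D = 1 - cnj b * z"
  define a where "a = (z - b) / cnj D"
  define u where "u = e * cnj D / D"
  have e_cnj: "e * cnj e = 1"
    using complex_norm_square[of e] e by simp
  have b: "norm b < 1" "norm b = norm w"
    using w e by (simp_all add: b_def norm_mult)
  have "D \<noteq> 0"
    using norm_mult_less[of "cnj b" 1 z 1] b z by (auto simp: D_def)
  then have "norm u = 1"
    using e by (simp add: u_def norm_mult norm_divide)
  then have u: "exp (\<i> * Arg u) = u"
    using cis_Arg[of u] by (cases "u = 0") (auto simp: sgn_div_norm simp flip: cis_conv_exp)
  have a: "norm a < 1"
    using Moebius_function_value_and_deriv(1)[OF b(1) z] by (simp add: a_def D_def)
  note \<phi> = Moebius_function_value_and_deriv(2,3)[OF b(1) z, of "Arg u", folded D_def a_def, unfolded u]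
  have "Moebius_function (Arg u) a z = w"
    unfolding \<phi>(1) using \<open>D \<noteq> 0\<close> e_cnj by (simp add: u_def b_def mult.left_commute)
  moreover have "deriv (Moebius_function (Arg u) a) z = e * ((1 - (norm w)\<^sup>2) / (1 - (norm z)\<^sup>2))"
    unfolding \<phi>(2) using \<open>D \<noteq> 0\<close> by (simp add: u_def b)
  ultimately show ?thesis
    using a Moebius_function_in_hypG by blast
qed

definition hyp_norm :: "complex \<Rightarrow> complex \<Rightarrow> real" where
  "hyp_norm z v = 2 * norm v / (1 - (norm z)\<^sup>2)"

lemma hypG_normalizes_tangent_vector:
  fixes z w v :: complex
  assumes "norm z < 1" "norm w < 1"
  shows "\<exists>\<phi>\<in>hypG. \<phi> z = w \<and> deriv \<phi> z * v = (1 - (norm w)\<^sup>2) / 2 * hyp_norm z v"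
proof -
  define e where "e = (if v = 0 then 1 else cnj v / norm v)"
  have "norm e = 1"
    by (simp add: e_def norm_divide)
  moreover have "e * v = norm v"
  proof (cases "v = 0")
    case False
    have "cnj v * v = norm v * norm v"
      using complex_norm_square[of v] by (simp add: power2_eq_square mult.commute)
    with False show ?thesis
      by (simp add: e_def)
  qed (simp add: e_def)
  ultimately show ?thesis
    using hypG_transitive_on_frames[OF assms]
    by (fastforce simp: hyp_norm_def)
qed

lemma hchart_has_vector_derivative_radial:
  "((\<lambda>s. hchart s y) has_vector_derivative complex_of_real ((1 - (tanh (x/2))\<^sup>2) / 2) * cis y) (at x)"
  unfolding hchart_def
  by (auto intro!: derivative_eq_intros has_vector_derivative_mult_left
      simp: cosh_real_pos[THEN order.strict_implies_not_eq, THEN not_sym])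

lemma hchart_has_vector_derivative_angular:
  "((\<lambda>s. hchart x s) has_vector_derivative complex_of_real (tanh (x/2)) * (\<i> * cis y)) (at y)"
  unfolding hchart_def has_vector_derivative_def
  by (auto intro!: derivative_eq_intros ext simp: algebra_simps)

lemma hpush_eq:
  "hpush x y p2 p3 = cis y * Complex ((1 - (tanh (x/2))\<^sup>2) / 2 * p2) (tanh (x/2) * p3)"
  unfolding hpush_def
    vector_derivative_at[OF hchart_has_vector_derivative_radial]
    vector_derivative_at[OF hchart_has_vector_derivative_angular]
  by (simp add: complex_eq_iff scaleR_conv_of_real algebra_simps)

lemma norm_hchart: "x \<ge> 0 \<Longrightarrow> norm (hchart x y) = tanh (x/2)"
  by (simp add: hchart_def norm_mult)

lemma tanh_half_double: "2 * tanh (x/2) = (1 - (tanh (x/2))\<^sup>2) * sinh (x::real)"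
proof -
  have cosh: "cosh (x/2) \<noteq> 0"
    using cosh_real_pos[of "x/2"] by simp
  then have "1 - (tanh (x/2))\<^sup>2 = ((cosh (x/2))\<^sup>2 - (sinh (x/2))\<^sup>2) / (cosh (x/2))\<^sup>2"
    by (simp add: tanh_def field_simps)
  also have "\<dots> = 1 / (cosh (x/2))\<^sup>2"
    by (simp add: cosh_square_eq)
  finally have tanh_sq: "1 - (tanh (x/2))\<^sup>2 = 1 / (cosh (x/2))\<^sup>2" .
  have sinh: "sinh x = 2 * sinh (x/2) * cosh (x/2)"
    using sinh_double[of "x/2"] by simp
  show ?thesis
    unfolding tanh_sq sinh using cosh by (simp add: tanh_def field_simps power2_eq_square)
qed

lemma hyp_norm_hpush:
  assumes "x > 0"
  shows "hyp_norm (hchart x y) (hpush x y p2 p3) = sqrt (p2\<^sup>2 + (sinh x)\<^sup>2 * p3\<^sup>2)"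
proof -
  define r where "r = tanh (x/2)"
  have "r\<^sup>2 < 1"
    using tanh_real_bounds[of "x/2"] by (simp add: r_def abs_square_less_1 abs_less_iff)
  have "(norm (hpush x y p2 p3))\<^sup>2 = ((1 - r\<^sup>2) / 2 * p2)\<^sup>2 + (r * p3)\<^sup>2"
    by (simp add: hpush_eq norm_mult cmod_power2 r_def)
  also have "r * p3 = (1 - r\<^sup>2) / 2 * sinh x * p3"
    using tanh_half_double[of x] by (simp add: r_def)
  also have "((1 - r\<^sup>2) / 2 * p2)\<^sup>2 + \<dots>\<^sup>2 = ((1 - r\<^sup>2) / 2)\<^sup>2 * (p2\<^sup>2 + (sinh x)\<^sup>2 * p3\<^sup>2)"
    by (simp add: field_simps power2_eq_square)
  finally have "norm (hpush x y p2 p3) = sqrt (((1 - r\<^sup>2) / 2)\<^sup>2 * (p2\<^sup>2 + (sinh x)\<^sup>2 * p3\<^sup>2))"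
    by (simp add: real_sqrt_unique)
  also have "\<dots> = (1 - r\<^sup>2) / 2 * sqrt (p2\<^sup>2 + (sinh x)\<^sup>2 * p3\<^sup>2)"
    using \<open>r\<^sup>2 < 1\<close> by (simp add: real_sqrt_mult)
  finally show ?thesis
    using assms \<open>r\<^sup>2 < 1\<close> by (simp add: hyp_norm_def norm_hchart r_def field_simps)
qed

lemma hpush_radial: "hpush x 0 p 0 = (1 - (tanh (x/2))\<^sup>2) / 2 * p"
  by (simp add: hpush_eq complex_eq_iff)

lemma G_invariantD:
  assumes "G_invariant f" "\<phi> \<in> hypG" "t > 0" "x > 0" "x' > 0"
    and "hchart x' y' = \<phi> (hchart x y)"
    and "hpush x' y' p2' p3' = deriv \<phi> (hchart x y) * hpush x y p2 p3"
  shows "f t \<theta> x' y' p1 p2' p3' = f t \<theta> x y p1 p2 p3"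
  using assms unfolding G_invariant_def by blast

theorem lemma1:
  fixes f :: "real \<Rightarrow> real \<Rightarrow> real \<Rightarrow> real \<Rightarrow> real \<Rightarrow> real \<Rightarrow> real \<Rightarrow> real"
  assumes "G_invariant f"
  shows "\<exists>F :: real \<Rightarrow> real \<Rightarrow> real \<Rightarrow> real \<Rightarrow> real.
           \<forall>t \<theta> x y p1 p2 p3. t > 0 \<longrightarrow> x > 0 \<longrightarrow>
             f t \<theta> x y p1 p2 p3 = F t \<theta> p1 (p2\<^sup>2 + (sinh x)\<^sup>2 * p3\<^sup>2)"
proof (intro exI allI impI)
  fix t \<theta> x y p1 p2 p3 :: real
  assume "t > 0" "x > 0"
  define z where "z = hchart x y"
  define v where "v = hpush x y p2 p3"
  define w where "w = hchart 1 0"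
  have "norm z < 1" "norm w < 1"
    using \<open>x > 0\<close> by (simp_all add: z_def w_def norm_hchart tanh_real_lt_1)
  then obtain \<phi> where "\<phi> \<in> hypG" "\<phi> z = w"
    and dv: "deriv \<phi> z * v = (1 - (norm w)\<^sup>2) / 2 * hyp_norm z v"
    using hypG_normalizes_tangent_vector by blast
  have "hchart 1 0 = \<phi> z"
    using \<open>\<phi> z = w\<close> by (simp add: w_def)
  moreover have "hpush 1 0 (sqrt (p2\<^sup>2 + (sinh x)\<^sup>2 * p3\<^sup>2)) 0 = deriv \<phi> z * v"
    unfolding dv using \<open>x > 0\<close> by (simp add: hpush_radial z_def v_def w_def norm_hchart hyp_norm_hpush)
  ultimately have "f t \<theta> 1 0 p1 (sqrt (p2\<^sup>2 + (sinh x)\<^sup>2 * p3\<^sup>2)) 0 = f t \<theta> x y p1 p2 p3"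
    unfolding z_def v_def by (rule G_invariantD[OF assms \<open>\<phi> \<in> hypG\<close> \<open>t > 0\<close> \<open>x > 0\<close> zero_less_one])
  then show "f t \<theta> x y p1 p2 p3
      = (\<lambda>t \<theta> p1 n. f t \<theta> 1 0 p1 (sqrt n) 0) t \<theta> p1 (p2\<^sup>2 + (sinh x)\<^sup>2 * p3\<^sup>2)"
    by simp
qed

end
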